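(* Let $h>0$ and let $f_i, d_i, P_i, Q_i$ be real numbers with $P_i$ and $Q_i$ nonzero and of the same sign, i.e. $P_iQ_i>0$. For $k\in[0,1]$ define $$R(k) = f_i + d_i h k + \frac{P_i^2 k^2}{Q_i + (P_i - Q_i)k},\qquad C(k) = f_i + d_i h k + (2P_i - Q_i)k^2 + (Q_i - P_i)k^3,$$ and, for a weighting parameter $\alpha\in[0,1]$, $$F_\alpha(k) = \alpha R(k) + (1-\alpha) C(k),$$ regarded as a function of $x = x_i + kh$, so that $\partial^2 F_\alpha/\partial x^2 = h^{-2}\, d^2F_\alpha/dk^2$. Set $$M_i = \max\Big[2,\ \max\Big(\frac{Q_i}{P_i}, \frac{P_i}{Q_i}\Big)\Big],\qquad \alpha^* = \frac{M_i(M_i-2)}{M_i(M_i-2)+1}.$$ Then $\alpha^*\in[0,1)$, and for $\alpha\in[0,1]$ the interpolant $F_\alpha$ preserves the convexity of the data on the cell, i.e. $$\frac{\partial^2 F_\alpha(k)}{\partial x^2}\le 0 \text{ for all } k\in[0,1] \text{ when } P_i<0,\ Q_i<0,\qquad \frac{\partial^2 F_\alpha(k)}{\partial x^2}\ge 0 \text{ for all } k\in[0,1] \text{ when } P_i>0,\ Q_i>0,$$ if and only if $\alpha\ge\alpha^*$. In particular, $\alpha^*$ is the smallest such weighting parameter, and $\alpha^*=0$ (the purely cubic interpolant is convexity preserving) whenever $1/2\le Q_i/P_i\le 2$.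
   Context: This concerns a semi-Lagrangian (CIP-type) scheme for the 1D advection equation $f_t + u f_x = 0$ on a uniform grid of spacing $h$. On a cell $[x_i,x_{i+1}]$, $f_i, f_{i+1}$ are the values of the quantity and $d_i, d_{i+1}$ its first spatial derivatives at the grid points; $S_i=(f_{i+1}-f_i)/h$, $P_i=(S_i-d_i)h$, $Q_i=(d_{i+1}-S_i)h$. The data are convex on the cell when $d_i>S_i>d_{i+1}$ (i.e. $P_i<0,\ Q_i<0$) and concave when $d_i<S_i<d_{i+1}$ (i.e. $P_i>0,\ Q_i>0$). $k=-u_i\Delta t/h\in[0,1]$ is the local Courant number. $R$ is the rational (cubic-rational) interpolant and $C$ is the Hermite cubic interpolant; both match $f_i, f_{i+1}, d_i, d_{i+1}$ at the cell ends. The denominator $Q_i+(P_i-Q_i)k$ of $R$ does not vanish for $k\in[0,1]$ when $P_iQ_i>0$. *)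

theory Defs
  imports "HOL-Analysis.Analysis"
begin

definition cipR :: "real \<Rightarrow> real \<Rightarrow> real \<Rightarrow> real \<Rightarrow> real \<Rightarrow> real \<Rightarrow> real" where
  "cipR h f d P Q k = f + d * h * k + P^2 * k^2 / (Q + (P - Q) * k)"

definition cipC :: "real \<Rightarrow> real \<Rightarrow> real \<Rightarrow> real \<Rightarrow> real \<Rightarrow> real \<Rightarrow> real" where
  "cipC h f d P Q k = f + d * h * k + (2 * P - Q) * k^2 + (Q - P) * k^3"

definition cipF :: "real \<Rightarrow> real \<Rightarrow> real \<Rightarrow> real \<Rightarrow> real \<Rightarrow> real \<Rightarrow> real \<Rightarrow> real" where
  "cipF \<alpha> h f d P Q k = \<alpha> * cipR h f d P Q k + (1 - \<alpha>) * cipC h f d P Q k"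

text \<open>Second derivative with respect to x = x_i + k h, i.e. h^(-2) d^2 F / dk^2.\<close>
definition cipF_xx :: "real \<Rightarrow> real \<Rightarrow> real \<Rightarrow> real \<Rightarrow> real \<Rightarrow> real \<Rightarrow> real \<Rightarrow> real" where
  "cipF_xx \<alpha> h f d P Q k = (deriv ^^ 2) (cipF \<alpha> h f d P Q) k / h^2"

definition convexity_preserving :: "real \<Rightarrow> real \<Rightarrow> real \<Rightarrow> real \<Rightarrow> real \<Rightarrow> real \<Rightarrow> bool" where
  "convexity_preserving \<alpha> h f d P Q \<longleftrightarrow>
     ((P < 0 \<and> Q < 0) \<longrightarrow> (\<forall>k\<in>{0..1}. cipF_xx \<alpha> h f d P Q k \<le> 0)) \<and>
     ((P > 0 \<and> Q > 0) \<longrightarrow> (\<forall>k\<in>{0..1}. cipF_xx \<alpha> h f d P Q k \<ge> 0))"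

definition cipM :: "real \<Rightarrow> real \<Rightarrow> real" where
  "cipM P Q = max 2 (max (Q / P) (P / Q))"

definition alpha_star :: "real \<Rightarrow> real \<Rightarrow> real" where
  "alpha_star P Q = cipM P Q * (cipM P Q - 2) / (cipM P Q * (cipM P Q - 2) + 1)"

end

theory Submission
  imports Defs
begin

text \<open>
  With \<open>D = Q + (P - Q) k\<close>, the second \<open>k\<close>-derivative of \<open>F\<^sub>\<alpha>\<close> is
  \<open>\<alpha> 2 P\<^sup>2 Q\<^sup>2 / D\<^sup>3 + (1 - \<alpha>) (2 (2 P - Q) + 6 (Q - P) k)\<close>.
  Negating \<open>P, Q\<close> negates it and exchanging \<open>P, Q\<close> reflects \<open>k \<mapsto> 1 - k\<close>, so it suffices
  to consider \<open>0 < P \<le> Q\<close>. Then \<open>D\<close> decreases and the cubic part increases in \<open>k\<close>, so the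
  minimum over the cell is attained at \<open>k = 0\<close>, where with \<open>r = Q / P\<close> the value is
  \<open>(2 P / r) (\<alpha> - (1 - \<alpha>) r (r - 2))\<close>; this is nonnegative iff \<open>\<alpha> \<ge> \<alpha>\<^sup>*\<close>.
\<close>

lemma deriv2_eqI:
  fixes f f' :: "real \<Rightarrow> real"
  assumes "open S" "x \<in> S"
    and "\<And>y. y \<in> S \<Longrightarrow> (f has_real_derivative f' y) (at y)"
    and "(f' has_real_derivative f'') (at x)"
  shows "(deriv ^^ 2) f x = f''"
proof -
  have "(deriv f has_real_derivative f'') (at x)"
    using assms(4) by (rule has_field_derivative_transform_within_open)
      (use assms in \<open>auto intro: DERIV_imp_deriv [symmetric]\<close>)
  then show ?thesis by (simp add: numeral_2_eq_2 DERIV_imp_deriv)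
qed

lemma has_real_derivative_square_over_affine:
  fixes Q a x :: real
  assumes "Q + a * x \<noteq> 0"
  shows "((\<lambda>x. x^2 / (Q + a * x)) has_real_derivative
           (2 * Q * x + a * x^2) / (Q + a * x)^2) (at x)"
  apply (rule derivative_eq_intros refl)+
  using assms apply (simp_all add: power2_eq_square field_simps)
  done

lemma has_real_derivative_quadratic_over_affine_square:
  fixes Q a x :: real
  assumes "Q + a * x \<noteq> 0"
  shows "((\<lambda>x. (2 * Q * x + a * x^2) / (Q + a * x)^2) has_real_derivative
           2 * Q^2 / (Q + a * x)^3) (at x)"
  apply (rule derivative_eq_intros refl)+
  using assms apply simp_all
  apply (simp add: divide_simps eval_nat_numeral)
  by algebra

lemma affine_denominator_pos:
  fixes P Q k :: real
  assumes "0 < P" "0 < Q" "0 \<le> k" "k \<le> 1"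
  shows "0 < Q + (P - Q) * k"
proof -
  have "min P Q = (1 - k) * min P Q + k * min P Q" by algebra
  also have "\<dots> \<le> (1 - k) * Q + k * P"
    using assms by (intro add_mono mult_left_mono) auto
  finally show ?thesis using assms by (simp add: algebra_simps)
qed

lemma affine_denominator_nonzero:
  fixes P Q k :: real
  assumes "0 < P * Q" "0 \<le> k" "k \<le> 1"
  shows "Q + (P - Q) * k \<noteq> 0"
proof -
  from \<open>0 < P * Q\<close> consider "0 < P" "0 < Q" | "0 < -P" "0 < -Q"
    by (auto simp: zero_less_mult_iff)
  then show ?thesis
    using affine_denominator_pos [of P Q k] affine_denominator_pos [of "-P" "-Q" k] assms
    by cases (auto simp: algebra_simps)
qed

definition cipF_kk :: "real \<Rightarrow> real \<Rightarrow> real \<Rightarrow> real \<Rightarrow> real" where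
  "cipF_kk \<alpha> P Q k = \<alpha> * (2 * P^2 * Q^2 / (Q + (P - Q) * k)^3)
     + (1 - \<alpha>) * (2 * (2 * P - Q) + 6 * (Q - P) * k)"

lemma cipF_xx_eq:
  assumes "Q + (P - Q) * k \<noteq> 0"
  shows "cipF_xx \<alpha> h f d P Q k = cipF_kk \<alpha> P Q k / h^2"
proof -
  let ?D = "\<lambda>k. Q + (P - Q) * k"
  define F' where "F' k = \<alpha> * (d * h + P^2 * ((2 * Q * k + (P - Q) * k^2) / ?D k ^ 2))
      + (1 - \<alpha>) * (d * h + 2 * (2 * P - Q) * k + 3 * (Q - P) * k^2)" for k
  have "(cipF \<alpha> h f d P Q has_real_derivative F' x) (at x)" if "?D x \<noteq> 0" for x
    unfolding cipF_def cipR_def cipC_def F'_def times_divide_eq_right [symmetric]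
    by (rule derivative_eq_intros has_real_derivative_square_over_affine [OF that] refl)+
       (simp add: algebra_simps)
  moreover have "(F' has_real_derivative cipF_kk \<alpha> P Q k) (at k)"
    unfolding F'_def cipF_kk_def
    by (rule derivative_eq_intros
          has_real_derivative_quadratic_over_affine_square [OF assms] refl)+
       (simp add: algebra_simps)
  moreover have "open {x. ?D x \<noteq> 0}"
    by (intro open_Collect_neq continuous_intros)
  ultimately have "(deriv ^^ 2) (cipF \<alpha> h f d P Q) k = cipF_kk \<alpha> P Q k"
    using assms by (intro deriv2_eqI [of "{x. ?D x \<noteq> 0}"]) auto
  then show ?thesis unfolding cipF_xx_def by simp
qed

lemma cipF_kk_uminus: "cipF_kk \<alpha> (-P) (-Q) k = - cipF_kk \<alpha> P Q k"
proof -
  have "(-Q + (-P - -Q) * k)^3 = - ((Q + (P - Q) * k)^3)" by algebra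
  then show ?thesis unfolding cipF_kk_def by (simp add: algebra_simps)
qed

lemma cipF_kk_swap: "cipF_kk \<alpha> Q P (1 - k) = cipF_kk \<alpha> P Q k"
proof -
  have "P + (Q - P) * (1 - k) = Q + (P - Q) * k" by algebra
  then show ?thesis unfolding cipF_kk_def by (simp add: algebra_simps)
qed

lemma alpha_star_uminus: "alpha_star (-P) (-Q) = alpha_star P Q"
  unfolding alpha_star_def cipM_def by simp

lemma alpha_star_commute: "alpha_star Q P = alpha_star P Q"
  unfolding alpha_star_def cipM_def by (simp add: max.commute)

lemma alpha_star_le_iff:
  "alpha_star P Q \<le> \<alpha> \<longleftrightarrow> (1 - \<alpha>) * (cipM P Q * (cipM P Q - 2)) \<le> \<alpha>"
proof -
  define g where "g = cipM P Q * (cipM P Q - 2)"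
  have "cipM P Q \<ge> 2" unfolding cipM_def by simp
  then have "0 \<le> g" unfolding g_def by simp
  then have "g + 1 > 0" by linarith
  then have "alpha_star P Q \<le> \<alpha> \<longleftrightarrow> g \<le> \<alpha> * (g + 1)"
    unfolding alpha_star_def g_def [symmetric] by (simp add: divide_le_eq)
  also have "\<dots> \<longleftrightarrow> (1 - \<alpha>) * g \<le> \<alpha>" by (simp add: algebra_simps)
  finally show ?thesis unfolding g_def .
qed

lemma cipF_kk_mono:
  assumes "0 < P" "P \<le> Q" "0 \<le> \<alpha>" "\<alpha> \<le> 1"
  shows "mono_on {0..1} (cipF_kk \<alpha> P Q)"
proof (rule mono_onI)
  fix k l :: real
  assume "k \<in> {0..1}" and l: "l \<in> {0..1}" and "k \<le> l"
  define D where "D x = Q + (P - Q) * x" for x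
  have "0 < D l" unfolding D_def using l assms affine_denominator_pos by auto
  moreover have "D l \<le> D k" unfolding D_def using \<open>k \<le> l\<close> assms
    by (intro add_left_mono mult_left_mono_neg) auto
  ultimately have rational: "2 * P^2 * Q^2 / D k ^ 3 \<le> 2 * P^2 * Q^2 / D l ^ 3"
    by (intro divide_left_mono power_mono mult_pos_pos) auto
  have cubic: "2 * (2 * P - Q) + 6 * (Q - P) * k \<le> 2 * (2 * P - Q) + 6 * (Q - P) * l"
    using \<open>k \<le> l\<close> assms by (intro add_left_mono mult_left_mono) auto
  show "cipF_kk \<alpha> P Q k \<le> cipF_kk \<alpha> P Q l"
    unfolding cipF_kk_def D_def using assms
    by (intro add_mono mult_left_mono [OF rational [unfolded D_def]] mult_left_mono [OF cubic]) auto
qed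

lemma cipF_kk_at_0_nonneg_iff:
  assumes "0 < P" "P \<le> Q" "0 \<le> \<alpha>" "\<alpha> \<le> 1"
  shows "0 \<le> cipF_kk \<alpha> P Q 0 \<longleftrightarrow> alpha_star P Q \<le> \<alpha>"
proof -
  define r where "r = Q / P"
  have Q: "Q = r * P" and "1 \<le> r" using assms unfolding r_def by auto
  have "P / Q \<le> 1" using assms by simp
  define c where "c = 2 * P / r"
  have "cipF_kk \<alpha> P Q 0 = c * (\<alpha> - (1 - \<alpha>) * (r * (r - 2)))"
    unfolding cipF_kk_def Q c_def using \<open>1 \<le> r\<close> assms
    by (simp add: field_simps power2_eq_square power3_eq_cube)
  moreover have "0 < c" unfolding c_def using assms \<open>1 \<le> r\<close> by simp
  ultimately have "0 \<le> cipF_kk \<alpha> P Q 0 \<longleftrightarrow> (1 - \<alpha>) * (r * (r - 2)) \<le> \<alpha>"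
    by (simp add: zero_le_mult_iff)
  also have "\<dots> \<longleftrightarrow> (1 - \<alpha>) * (cipM P Q * (cipM P Q - 2)) \<le> \<alpha>"
  proof (cases "r \<le> 2")
    case True
    then have "(1 - \<alpha>) * (r * (r - 2)) \<le> 0"
      using \<open>1 \<le> r\<close> assms by (intro mult_nonneg_nonpos) (auto simp: mult_nonneg_nonpos)
    moreover have "cipM P Q = 2"
      using True \<open>P / Q \<le> 1\<close> unfolding cipM_def r_def by (auto simp: max_def)
    ultimately show ?thesis using assms by simp
  next
    case False
    then have "cipM P Q = r"
      using \<open>P / Q \<le> 1\<close> unfolding cipM_def r_def by (auto simp: max_def)
    then show ?thesis by simp
  qed
  finally show ?thesis by (simp add: alpha_star_le_iff)
qed

lemma ball_unit_interval_reflect: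
  "(\<forall>k\<in>{0..1::real}. A (1 - k)) \<longleftrightarrow> (\<forall>k\<in>{0..1}. A k)"
proof -
  have "(\<lambda>k. 1 - k) ` {0..1::real} = {0..1}"
    by (auto simp: image_iff intro!: bexI [where x = "1 - x" for x])
  then show ?thesis by (metis ball_imageD image_eqI imageE)
qed

lemma cipF_kk_nonneg_iff_of_le:
  assumes "0 < P" "P \<le> Q" "0 \<le> \<alpha>" "\<alpha> \<le> 1"
  shows "(\<forall>k\<in>{0..1}. 0 \<le> cipF_kk \<alpha> P Q k) \<longleftrightarrow> alpha_star P Q \<le> \<alpha>"
proof
  assume "\<forall>k\<in>{0..1}. 0 \<le> cipF_kk \<alpha> P Q k"
  then show "alpha_star P Q \<le> \<alpha>"
    using cipF_kk_at_0_nonneg_iff [OF assms] by simp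
next
  assume "alpha_star P Q \<le> \<alpha>"
  then have "0 \<le> cipF_kk \<alpha> P Q 0"
    using cipF_kk_at_0_nonneg_iff [OF assms] by simp
  moreover have "cipF_kk \<alpha> P Q 0 \<le> cipF_kk \<alpha> P Q k" if "k \<in> {0..1}" for k
    using that by (intro mono_onD [OF cipF_kk_mono [OF assms]]) auto
  ultimately show "\<forall>k\<in>{0..1}. 0 \<le> cipF_kk \<alpha> P Q k"
    by (blast intro: order_trans)
qed

lemma cipF_kk_nonneg_iff:
  assumes "0 < P" "0 < Q" "0 \<le> \<alpha>" "\<alpha> \<le> 1"
  shows "(\<forall>k\<in>{0..1}. 0 \<le> cipF_kk \<alpha> P Q k) \<longleftrightarrow> alpha_star P Q \<le> \<alpha>"
proof (cases "P \<le> Q")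
  case True
  with assms show ?thesis by (intro cipF_kk_nonneg_iff_of_le)
next
  case False
  with assms have "(\<forall>k\<in>{0..1}. 0 \<le> cipF_kk \<alpha> Q P (1 - k)) \<longleftrightarrow> alpha_star Q P \<le> \<alpha>"
    by (subst ball_unit_interval_reflect) (intro cipF_kk_nonneg_iff_of_le, auto)
  then show ?thesis by (simp add: cipF_kk_swap alpha_star_commute)
qed

lemma convexity_preserving_iff:
  assumes "0 < h" "0 < P * Q" "0 \<le> \<alpha>" "\<alpha> \<le> 1"
  shows "convexity_preserving \<alpha> h f d P Q \<longleftrightarrow> alpha_star P Q \<le> \<alpha>"
proof -
  have xx: "cipF_xx \<alpha> h f d P Q k = cipF_kk \<alpha> P Q k / h^2" if "k \<in> {0..1}" for k
    using that by (intro cipF_xx_eq affine_denominator_nonzero [OF \<open>0 < P * Q\<close>]) auto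
  have "0 < h^2" using \<open>0 < h\<close> by simp
  from \<open>0 < P * Q\<close> consider "0 < P" "0 < Q" | "P < 0" "Q < 0"
    by (auto simp: zero_less_mult_iff)
  then show ?thesis
  proof cases
    case 1
    then have "convexity_preserving \<alpha> h f d P Q \<longleftrightarrow> (\<forall>k\<in>{0..1}. 0 \<le> cipF_kk \<alpha> P Q k)"
      unfolding convexity_preserving_def using xx \<open>0 < h^2\<close> by (simp add: zero_le_divide_iff)
    with 1 assms show ?thesis by (simp add: cipF_kk_nonneg_iff)
  next
    case 2
    then have "convexity_preserving \<alpha> h f d P Q \<longleftrightarrow> (\<forall>k\<in>{0..1}. 0 \<le> cipF_kk \<alpha> (-P) (-Q) k)"
      unfolding convexity_preserving_def using xx \<open>0 < h^2\<close>
      by (simp add: divide_le_0_iff cipF_kk_uminus)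
    with 2 assms show ?thesis by (simp add: cipF_kk_nonneg_iff alpha_star_uminus)
  qed
qed

lemma alpha_star_bounds: "0 \<le> alpha_star P Q" "alpha_star P Q < 1"
proof -
  have "0 \<le> cipM P Q * (cipM P Q - 2)" unfolding cipM_def by simp
  then show "0 \<le> alpha_star P Q" "alpha_star P Q < 1" unfolding alpha_star_def by simp_all
qed

lemma alpha_star_eq_0:
  assumes "1/2 \<le> Q / P" "Q / P \<le> 2"
  shows "alpha_star P Q = 0"
proof -
  have "P / Q = inverse (Q / P)" by simp
  also have "\<dots> \<le> inverse (1/2)" using assms(1) by (intro le_imp_inverse_le) auto
  finally have "cipM P Q = 2" unfolding cipM_def using assms by simp
  then show ?thesis unfolding alpha_star_def by simp
qed

theorem mainTheorem1:
  fixes h f d P Q :: real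
  assumes "h > 0" and "P * Q > 0"
  shows "0 \<le> alpha_star P Q \<and> alpha_star P Q < 1
    \<and> (\<forall>\<alpha>\<in>{0..1}. convexity_preserving \<alpha> h f d P Q \<longleftrightarrow> alpha_star P Q \<le> \<alpha>)
    \<and> (1/2 \<le> Q / P \<and> Q / P \<le> 2 \<longrightarrow> alpha_star P Q = 0)"
  using alpha_star_bounds convexity_preserving_iff [OF assms] alpha_star_eq_0 by auto

end
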